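(* Let $\mu$ be a probability measure on $\mathbb{R}^d$ absolutely continuous with respect to Lebesgue measure and $n\ge1$. The assignment \[ F(\mathbb{R}^d,n)\times\mathcal{K}^d\longrightarrow W_n,\qquad (x,K)\longmapsto w_K(x), \] is continuous and $S_n$-equivariant, where $S_n$ acts trivially on the $\mathcal{K}^d$-coordinate of the domain.
   Context: $\mathcal{K}^d$ is the set of compact convex subsets of $\mathbb{R}^d$ with nonempty interior, with the Hausdorff metric $d_H(X,Y)=\max\{\sup_{x\in X}\mathrm{dist}(x,Y),\sup_{y\in Y}\mathrm{dist}(y,X)\}$. $F(\mathbb{R}^d,n)$ is the space of $n$-tuples of pairwise distinct points of $\mathbb{R}^d$ and $W_n=\{w\in\mathbb{R}^n:\sum w_i=0\}$; $S_n$ acts on both by permuting coordinates, $\sigma\cdot(x_1,\dots,x_n)=(x_{\sigma^{-1}(1)},\dots,x_{\sigma^{-1}(n)})$. For $x\in F(\mathbb{R}^d,n)$, $w\in\mathbb{R}^n$, the generalised Voronoi cells are $C_i(x,w)=\{p\in\mathbb{R}^d:\|p-x_i\|^2-w_i\le\|p-x_j\|^2-w_j\text{ for all }1\le j\le n\}$. Standing fact (from the literature): for every $K\in\mathcal{K}^d$ and $x\in F(\mathbb{R}^d,n)$ there are unique weights $w_K(x)\in W_n$ such that the sets $K\cap C_i(x,w_K(x))$, $1\le i\le n$, are convex bodies with equal $\mu$-measure. *)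

theory Defs
  imports "HOL-Probability.Probability"
begin

definition convex_body :: "'a::euclidean_space set \<Rightarrow> bool" where
  "convex_body K \<longleftrightarrow> compact K \<and> convex K \<and> interior K \<noteq> {}"

definition hausdorff_dist :: "'a::euclidean_space set \<Rightarrow> 'a set \<Rightarrow> real" where
  "hausdorff_dist X Y = max (SUP x\<in>X. setdist {x} Y) (SUP y\<in>Y. setdist {y} X)"

text \<open>Configuration space of n = CARD('n) pairwise distinct points.\<close>
definition conf_space :: "('a::euclidean_space ^ 'n::finite) set" where
  "conf_space = {x. \<forall>i j. i \<noteq> j \<longrightarrow> x $ i \<noteq> x $ j}"

definition W_space :: "(real ^ 'n::finite) set" where
  "W_space = {w. (\<Sum>i\<in>UNIV. w $ i) = 0}"

definition voronoi_cell :: "'a::euclidean_space ^ 'n::finite \<Rightarrow> real ^ 'n \<Rightarrow> 'n \<Rightarrow> 'a set" where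
  "voronoi_cell x w i = {p. \<forall>j. (norm (p - x $ i))\<^sup>2 - w $ i \<le> (norm (p - x $ j))\<^sup>2 - w $ j}"

definition equipartition_weight :: "'a::euclidean_space measure \<Rightarrow> 'a set \<Rightarrow> 'a ^ 'n::finite \<Rightarrow> real ^ 'n \<Rightarrow> bool" where
  "equipartition_weight \<mu> K x w \<longleftrightarrow> w \<in> W_space \<and>
     (\<forall>i. convex_body (K \<inter> voronoi_cell x w i)) \<and>
     (\<forall>i j. measure \<mu> (K \<inter> voronoi_cell x w i) = measure \<mu> (K \<inter> voronoi_cell x w j))"

definition wK :: "'a::euclidean_space measure \<Rightarrow> 'a set \<Rightarrow> 'a ^ 'n::finite \<Rightarrow> real ^ 'n" where
  "wK \<mu> K x = (THE w. equipartition_weight \<mu> K x w)"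

definition perm_act :: "('n::finite \<Rightarrow> 'n) \<Rightarrow> 'b ^ 'n \<Rightarrow> 'b ^ 'n" where
  "perm_act \<sigma> x = (\<chi> i. x $ (inv \<sigma> i))"

end

(* Continuity is proved by compactness. Along a sequence (y_k, L_k) -> (x, K) the weights
   w_{L_k}(y_k) stay bounded, since every cell of L_k is nonempty, so a subsequence converges to
   some w. Off the frontier of K and the bisecting hyperplanes of x, a Lebesgue-null and hence
   mu-null set, the indicators of the cells of L_k converge pointwise to those of the cells of K,
   so by dominated convergence w again splits K into parts of equal measure. These parts cover K
   and mu(K) > 0, so each has positive measure, hence nonempty interior, and uniqueness gives
   w = w_K(x). That mu(K) > 0 is itself forced by uniqueness when n >= 2: if mu(K) = 0, every small
   perturbation of w_K(x) along e_a - e_b would again be an equipartition weight.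
   Equivariance is immediate from uniqueness, since relabelling the sites permutes the cells. *)

theory Submission
  imports Defs
begin

section \<open>Power diagrams\<close>

definition power_dist :: "'a::euclidean_space ^ 'n::finite \<Rightarrow> real ^ 'n \<Rightarrow> 'n \<Rightarrow> 'a \<Rightarrow> real" where
  "power_dist x w i p = (norm (p - x $ i))\<^sup>2 - w $ i"

definition strict_voronoi_cell :: "'a::euclidean_space ^ 'n::finite \<Rightarrow> real ^ 'n \<Rightarrow> 'n \<Rightarrow> 'a set" where
  "strict_voronoi_cell x w i = {p. \<forall>j. j \<noteq> i \<longrightarrow> power_dist x w i p < power_dist x w j p}"

definition voronoi_bisector :: "'a::euclidean_space ^ 'n::finite \<Rightarrow> real ^ 'n \<Rightarrow> 'n \<Rightarrow> 'n \<Rightarrow> 'a set" where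
  "voronoi_bisector x w i j = {p. power_dist x w i p = power_dist x w j p}"

lemma voronoi_cell_power_dist: "voronoi_cell x w i = {p. \<forall>j. power_dist x w i p \<le> power_dist x w j p}"
  by (simp add: voronoi_cell_def power_dist_def)

lemma power_dist_diff_affine:
  "power_dist x w i p - power_dist x w j p =
     inner (2 *\<^sub>R (x$j - x$i)) p + (inner (x$i) (x$i) - inner (x$j) (x$j)) - (w$i - w$j)"
  by (simp add: power_dist_def power2_norm_eq_inner inner_diff_left inner_diff_right
      inner_commute algebra_simps)

lemma power_dist_le_iff:
  "power_dist x w i p \<le> power_dist x w j p \<longleftrightarrow>
     inner (2 *\<^sub>R (x$j - x$i)) p \<le> w$i - w$j - (inner (x$i) (x$i) - inner (x$j) (x$j))"
  using power_dist_diff_affine[of x w i p j] by linarith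

lemma power_dist_eq_iff:
  "power_dist x w i p = power_dist x w j p \<longleftrightarrow>
     inner (2 *\<^sub>R (x$j - x$i)) p = w$i - w$j - (inner (x$i) (x$i) - inner (x$j) (x$j))"
  using power_dist_diff_affine[of x w i p j] by linarith

lemma voronoi_cell_halfspaces:
  "voronoi_cell x w i =
     (\<Inter>j. {p. inner (2 *\<^sub>R (x$j - x$i)) p \<le> w$i - w$j - (inner (x$i) (x$i) - inner (x$j) (x$j))})"
  unfolding voronoi_cell_power_dist power_dist_le_iff by blast

lemma closed_voronoi_cell: "closed (voronoi_cell x w i)"
  unfolding voronoi_cell_halfspaces by (intro closed_INT ballI closed_halfspace_le)

lemma convex_voronoi_cell: "convex (voronoi_cell x w i)"
  unfolding voronoi_cell_halfspaces by (intro convex_INT ballI convex_halfspace_le)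

lemma negligible_voronoi_bisector:
  assumes "x \<in> conf_space" "i \<noteq> j"
  shows "negligible (voronoi_bisector x w i j)"
proof -
  have "voronoi_bisector x w i j =
      {p. inner (2 *\<^sub>R (x$j - x$i)) p = w$i - w$j - (inner (x$i) (x$i) - inner (x$j) (x$j))}"
    unfolding voronoi_bisector_def power_dist_eq_iff ..
  also have "negligible \<dots>"
    using assms by (intro negligible_hyperplane) (auto simp: conf_space_def)
  finally show ?thesis .
qed

lemma closed_voronoi_bisector: "closed (voronoi_bisector x w i j)"
  unfolding voronoi_bisector_def power_dist_def by (intro closed_Collect_eq continuous_intros)

lemma open_strict_voronoi_cell: "open (strict_voronoi_cell x w i)"
proof -
  have "strict_voronoi_cell x w i = (\<Inter>j\<in>-{i}. {p. power_dist x w i p < power_dist x w j p})"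
    unfolding strict_voronoi_cell_def by auto
  also have "open \<dots>"
    unfolding power_dist_def by (intro open_INT ballI open_Collect_less continuous_intros) auto
  finally show ?thesis .
qed

lemma open_weights_strict_voronoi_cell: "open {w. p \<in> strict_voronoi_cell x w i}"
proof -
  have "{w. p \<in> strict_voronoi_cell x w i} = (\<Inter>j\<in>-{i}. {w. power_dist x w i p < power_dist x w j p})"
    unfolding strict_voronoi_cell_def by auto
  also have "open \<dots>"
    unfolding power_dist_def by (intro open_INT ballI open_Collect_less continuous_intros) auto
  finally show ?thesis .
qed

lemma strict_voronoi_cell_subset: "strict_voronoi_cell x w i \<subseteq> voronoi_cell x w i"
  unfolding strict_voronoi_cell_def voronoi_cell_power_dist by (auto intro: less_imp_le)

lemma voronoi_cell_subset_strict_Un_bisectors: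
  "voronoi_cell x w i \<subseteq> strict_voronoi_cell x w i \<union> (\<Union>j\<in>-{i}. voronoi_bisector x w i j)"
proof
  fix p assume "p \<in> voronoi_cell x w i"
  then have le: "power_dist x w i p \<le> power_dist x w j p" for j
    by (simp add: voronoi_cell_power_dist)
  show "p \<in> strict_voronoi_cell x w i \<union> (\<Union>j\<in>-{i}. voronoi_bisector x w i j)"
  proof (cases "p \<in> strict_voronoi_cell x w i")
    case False
    then obtain j where "j \<noteq> i" "\<not> power_dist x w i p < power_dist x w j p"
      by (auto simp: strict_voronoi_cell_def)
    with le[of j] have "p \<in> voronoi_bisector x w i j" by (simp add: voronoi_bisector_def)
    with \<open>j \<noteq> i\<close> show ?thesis by blast
  qed simp
qed

lemma negligible_voronoi_bisectors:
  "x \<in> conf_space \<Longrightarrow> negligible (\<Union>j\<in>-{i}. voronoi_bisector x w i j)"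
  by (intro negligible_Union) (auto intro: negligible_voronoi_bisector)

lemma closed_voronoi_bisectors: "closed (\<Union>j\<in>-{i}. voronoi_bisector x w i j)"
  by (intro closed_UN ballI closed_voronoi_bisector) auto

lemma voronoi_cells_cover: "(\<Union>i. voronoi_cell x w i) = UNIV"
proof -
  have "\<exists>i. p \<in> voronoi_cell x w i" for p
  proof -
    obtain i where "\<forall>j. power_dist x w i p \<le> power_dist x w j p"
      using ex_min_if_finite[of "range (\<lambda>j. power_dist x w j p)"] by (auto simp: not_less)
    then show ?thesis unfolding voronoi_cell_power_dist by blast
  qed
  then show ?thesis by blast
qed

lemma interior_Int_strict_voronoi_cell_subset:
  "interior K \<inter> strict_voronoi_cell x w i \<subseteq> interior (K \<inter> voronoi_cell x w i)"
  using interior_subset strict_voronoi_cell_subset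
  by (intro interior_maximal open_Int open_interior open_strict_voronoi_cell) blast+

lemma interior_Int_strict_voronoi_cell_nonempty:
  assumes "x \<in> conf_space" "interior (K \<inter> voronoi_cell x w i) \<noteq> {}"
  shows "interior K \<inter> strict_voronoi_cell x w i \<noteq> {}"
proof -
  let ?U = "interior (K \<inter> voronoi_cell x w i)"
  let ?B = "\<Union>j\<in>-{i}. voronoi_bisector x w i j"
  have "\<not> ?U \<subseteq> ?B"
  proof
    assume "?U \<subseteq> ?B"
    with negligible_voronoi_bisectors[OF assms(1)] have "negligible ?U" by (rule negligible_subset)
    with open_not_negligible[OF open_interior assms(2)] show False by blast
  qed
  then obtain p where p: "p \<in> ?U" "p \<notin> ?B" by blast
  have "?U \<subseteq> interior K" by (rule interior_mono) blast
  moreover have "?U \<subseteq> voronoi_cell x w i" using interior_subset by blast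
  ultimately show ?thesis using p voronoi_cell_subset_strict_Un_bisectors[of x w i] by blast
qed

lemma tendsto_power_dist:
  "Y \<longlonglongrightarrow> x \<Longrightarrow> W \<longlonglongrightarrow> w \<Longrightarrow> (\<lambda>k. power_dist (Y k) (W k) i p) \<longlonglongrightarrow> power_dist x w i p"
  unfolding power_dist_def by (intro tendsto_intros)

lemma eventually_mem_voronoi_cell:
  assumes "Y \<longlonglongrightarrow> x" "W \<longlonglongrightarrow> w" "p \<in> strict_voronoi_cell x w i"
  shows "\<forall>\<^sub>F k in sequentially. p \<in> voronoi_cell (Y k) (W k) i"
proof -
  have "\<forall>\<^sub>F k in sequentially. j \<noteq> i \<longrightarrow> power_dist (Y k) (W k) i p - power_dist (Y k) (W k) j p < 0" for j
  proof (cases "j = i")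
    case False
    then have "power_dist x w i p - power_dist x w j p < 0"
      using assms(3) by (simp add: strict_voronoi_cell_def)
    from order_tendstoD(2)[OF tendsto_diff[OF tendsto_power_dist[OF assms(1,2)]
          tendsto_power_dist[OF assms(1,2)]] this]
    show ?thesis by (rule eventually_mono) simp
  qed simp
  then have "\<forall>\<^sub>F k in sequentially. \<forall>j. j \<noteq> i \<longrightarrow> power_dist (Y k) (W k) i p < power_dist (Y k) (W k) j p"
    by (simp add: eventually_all_finite)
  then show ?thesis
    by (rule eventually_mono) (auto simp: voronoi_cell_power_dist less_imp_le)
qed

lemma eventually_not_mem_voronoi_cell:
  assumes "Y \<longlonglongrightarrow> x" "W \<longlonglongrightarrow> w" "p \<notin> voronoi_cell x w i"
  shows "\<forall>\<^sub>F k in sequentially. p \<notin> voronoi_cell (Y k) (W k) i"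
proof -
  obtain j where "power_dist x w i p - power_dist x w j p > 0"
    using assms(3) by (auto simp: voronoi_cell_power_dist not_le)
  from order_tendstoD(1)[OF tendsto_diff[OF tendsto_power_dist[OF assms(1,2)]
        tendsto_power_dist[OF assms(1,2)]] this]
  show ?thesis by (rule eventually_mono) (auto simp: voronoi_cell_power_dist not_le)
qed

section \<open>Convex bodies and the Hausdorff distance\<close>

lemma convex_body_bounded: "convex_body K \<Longrightarrow> bounded K"
  unfolding convex_body_def by (simp add: compact_imp_bounded)

lemma convex_body_closed: "convex_body K \<Longrightarrow> closed K"
  unfolding convex_body_def by (simp add: compact_imp_closed)

lemma convex_body_convex: "convex_body K \<Longrightarrow> convex K"
  unfolding convex_body_def by simp

lemma convex_body_nonempty: "convex_body K \<Longrightarrow> K \<noteq> {}"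
  unfolding convex_body_def using interior_subset by blast

lemma convex_body_Int_voronoi_cell_iff:
  "convex_body K \<Longrightarrow> convex_body (K \<inter> voronoi_cell x w i) \<longleftrightarrow> interior (K \<inter> voronoi_cell x w i) \<noteq> {}"
  unfolding convex_body_def
  by (auto intro: compact_Int_closed closed_voronoi_cell convex_Int convex_voronoi_cell)

lemma setdist_le_hausdorff_dist:
  fixes X Y :: "'a::euclidean_space set"
  assumes "bounded X" "Y \<noteq> {}" "x \<in> X"
  shows "setdist {x} Y \<le> hausdorff_dist X Y"
proof -
  obtain y where y: "y \<in> Y" using assms(2) by blast
  obtain B where B: "\<And>q. q \<in> X \<Longrightarrow> norm q \<le> B" using assms(1) bounded_iff by metis
  have "setdist {q} Y \<le> B + norm y" if "q \<in> X" for q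
  proof -
    have "setdist {q} Y \<le> dist q y" using y by (simp add: setdist_le_dist)
    also have "\<dots> \<le> norm q + norm y" by (simp add: dist_norm norm_triangle_ineq4)
    finally show ?thesis using B[OF that] by linarith
  qed
  then have "bdd_above ((\<lambda>q. setdist {q} Y) ` X)" by (rule bdd_aboveI2)
  then show ?thesis
    unfolding hausdorff_dist_def by (rule order_trans[OF cSUP_upper[OF assms(3)] max.cobounded1])
qed

lemma hausdorff_dist_commute: "hausdorff_dist X Y = hausdorff_dist Y X"
  unfolding hausdorff_dist_def by (rule max.commute)

lemma hausdorff_dist_nonneg:
  fixes X Y :: "'a::euclidean_space set"
  assumes "bounded X" "X \<noteq> {}" "Y \<noteq> {}"
  shows "0 \<le> hausdorff_dist X Y"
proof -
  obtain p where "p \<in> X" using assms(2) by blast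
  with assms(1,3) show ?thesis
    using setdist_pos_le[of "{p}" Y] setdist_le_hausdorff_dist by (blast intro: order_trans)
qed

lemma bounded_Union_if_hausdorff_dist_lt:
  fixes Y :: "'a::euclidean_space set"
  assumes Y: "bounded Y" "Y \<noteq> {}"
    and X: "\<And>X. X \<in> \<X> \<Longrightarrow> bounded X" "\<And>X. X \<in> \<X> \<Longrightarrow> hausdorff_dist X Y < r"
  shows "bounded (\<Union>\<X>)"
proof -
  obtain B where B: "\<forall>q\<in>Y. norm q \<le> B" using Y(1) unfolding bounded_iff by blast
  have "norm p \<le> B + r" if "X \<in> \<X>" "p \<in> X" for X p
  proof -
    have "setdist {p} Y < r" using setdist_le_hausdorff_dist[OF X(1) Y(2)] X(2) that by fastforce
    from setdist_ltE[OF this insert_not_empty Y(2)]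
    obtain p' q where "p' \<in> {p}" "q \<in> Y" "dist p' q < r" .
    then have "norm q \<le> B" "norm (p - q) < r" using B by (auto simp: dist_norm)
    then show ?thesis using norm_triangle_sub[of p q] by linarith
  qed
  then show ?thesis unfolding bounded_iff by blast
qed

text \<open>If \<open>p \<notin> L\<close>, a hyperplane separates \<open>p\<close> from \<open>L\<close>; stepping from \<open>p\<close> away from
  \<open>L\<close> stays in \<open>K\<close> but ends up farther than \<open>hausdorff_dist L K\<close> from \<open>L\<close>.\<close>

lemma mem_convex_if_hausdorff_dist_lt:
  fixes K L :: "'a::euclidean_space set"
  assumes ball: "ball p r \<subseteq> K" and "r > 0" "bounded K"
    and L: "convex L" "closed L" "L \<noteq> {}" and hd: "hausdorff_dist L K < r"
  shows "p \<in> L"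
proof (rule ccontr)
  assume "p \<notin> L"
  then obtain a b where ab: "inner a p < b" "\<And>q. q \<in> L \<Longrightarrow> inner a q > b"
    using separating_hyperplane_closed_point[OF L(1,2)] by blast
  then have "a \<noteq> 0" using L(3) by fastforce
  define u where "u = a /\<^sub>R norm a"
  have u: "norm u = 1" "\<And>q. q \<in> L \<Longrightarrow> inner u p < inner u q"
    using \<open>a \<noteq> 0\<close> ab by (fastforce simp: u_def divide_strict_right_mono)+
  have "0 \<le> setdist {p} L" by (rule setdist_pos_le)
  also have "\<dots> \<le> hausdorff_dist L K"
    using setdist_le_hausdorff_dist[of K L p] ball \<open>r > 0\<close> \<open>bounded K\<close> L(3)
    by (simp add: hausdorff_dist_commute subset_eq)
  finally obtain t where t: "hausdorff_dist L K < t" "t < r" "0 < t"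
    using hd dense by (metis le_less_trans)
  define y where "y = p - t *\<^sub>R u"
  have "y \<in> K" using ball t u(1) by (auto simp: y_def dist_norm)
  have "t \<le> dist y q" if "q \<in> L" for q
  proof -
    have "t < inner u (q - y)"
      using u that by (simp add: y_def inner_diff_right power2_norm_eq_inner[symmetric])
    also have "\<dots> \<le> norm (q - y)" using norm_cauchy_schwarz[of u "q - y"] u(1) by simp
    finally show ?thesis by (simp add: dist_norm norm_minus_commute)
  qed
  then have "t \<le> setdist {y} L" using L(3) by (auto simp: le_setdist_iff)
  moreover have "setdist {y} L \<le> hausdorff_dist L K"
    using setdist_le_hausdorff_dist[OF \<open>bounded K\<close> L(3) \<open>y \<in> K\<close>] by (simp add: hausdorff_dist_commute)
  ultimately show False using t by linarith
qed

lemma eventually_mem_of_hausdorff_tendsto: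
  assumes K: "convex_body K" "p \<in> interior K" and L: "\<And>k. convex_body (L k)"
    and hd: "(\<lambda>k. hausdorff_dist (L k) K) \<longlonglongrightarrow> 0"
  shows "\<forall>\<^sub>F k in sequentially. p \<in> L k"
proof -
  obtain r where r: "r > 0" "ball p r \<subseteq> K" using K(2) mem_interior by blast
  from order_tendstoD(2)[OF hd r(1)] show ?thesis
    by (rule eventually_mono) (rule mem_convex_if_hausdorff_dist_lt[OF r(2,1)
        convex_body_bounded[OF K(1)] convex_body_convex[OF L] convex_body_closed[OF L] convex_body_nonempty[OF L]])
qed

lemma eventually_not_mem_of_hausdorff_tendsto:
  assumes K: "closed K" "K \<noteq> {}" "p \<notin> K" and L: "\<And>k. bounded (L k)"
    and hd: "(\<lambda>k. hausdorff_dist (L k) K) \<longlonglongrightarrow> 0"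
  shows "\<forall>\<^sub>F k in sequentially. p \<notin> L k"
proof -
  have "setdist {p} K > 0"
    using K setdist_eq_0_closed[of K p] setdist_pos_le[of "{p}" K] by linarith
  from order_tendstoD(2)[OF hd this] show ?thesis
    by eventually_elim (use setdist_le_hausdorff_dist[OF L K(2)] in force)
qed

section \<open>Convergence of cell measures\<close>

lemma null_sets_if_negligible:
  assumes "absolutely_continuous lborel \<mu>" "S \<in> sets borel" "negligible S"
  shows "S \<in> null_sets \<mu>"
proof -
  have "S \<in> null_sets lborel"
    using assms(2,3) by (simp add: negligible_iff_null_sets null_sets_completion_iff)
  then show ?thesis using assms(1) by (auto simp: absolutely_continuous_def)
qed

lemma interior_nonempty_if_measure_pos:
  fixes A :: "'a::euclidean_space set"
  assumes "absolutely_continuous lborel \<mu>" "convex A" "closed A" "measure \<mu> A > 0"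
  shows "interior A \<noteq> {}"
proof
  assume "interior A = {}"
  with assms(2) have "negligible A" by (simp add: negligible_convex_interior)
  with assms(1,3) have "A \<in> null_sets \<mu>" by (simp add: null_sets_if_negligible)
  with assms(4) show False by (simp add: measure_def null_sets_def)
qed

lemma (in finite_measure) tendsto_measure_if_AE_tendsto_indicator:
  assumes "\<And>k. A k \<in> sets M" "B \<in> sets M"
    and "AE p in M. (\<lambda>k. indicator (A k) p :: real) \<longlonglongrightarrow> indicator B p"
  shows "(\<lambda>k. measure M (A k)) \<longlonglongrightarrow> measure M B"
proof -
  have "(\<lambda>k. integral\<^sup>L M (indicator (A k))) \<longlonglongrightarrow> (integral\<^sup>L M (indicator B) :: real)"
    by (rule integral_dominated_convergence[where w = "\<lambda>_. 1"])
      (use assms in \<open>auto intro: AE_I2 simp: indicator_def\<close>)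
  with assms(1,2) show ?thesis by simp
qed

lemma eventually_mem_Int_voronoi_cell_iff:
  assumes K: "convex_body K" and L: "\<And>k. convex_body (L k)"
    and Y: "Y \<longlonglongrightarrow> x" and W: "W \<longlonglongrightarrow> w" and hd: "(\<lambda>k. hausdorff_dist (L k) K) \<longlonglongrightarrow> 0"
    and p: "p \<notin> frontier K \<union> (\<Union>j\<in>-{i}. voronoi_bisector x w i j)"
  shows "\<forall>\<^sub>F k in sequentially.
    p \<in> L k \<inter> voronoi_cell (Y k) (W k) i \<longleftrightarrow> p \<in> K \<inter> voronoi_cell x w i"
proof (cases "p \<in> K \<inter> voronoi_cell x w i")
  case True
  with p have "p \<in> interior K" "p \<in> strict_voronoi_cell x w i"
    using closure_closed[OF convex_body_closed[OF K]] voronoi_cell_subset_strict_Un_bisectors[of x w i]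
    by (auto simp: frontier_def)
  with eventually_mem_of_hausdorff_tendsto[OF K _ L hd] eventually_mem_voronoi_cell[OF Y W]
  have "\<forall>\<^sub>F k in sequentially. p \<in> L k \<and> p \<in> voronoi_cell (Y k) (W k) i"
    by (simp add: eventually_conj_iff)
  then show ?thesis by eventually_elim (use True in simp)
next
  case False
  have "\<forall>\<^sub>F k in sequentially. p \<notin> L k \<inter> voronoi_cell (Y k) (W k) i"
  proof (cases "p \<in> K")
    case True
    with False have "p \<notin> voronoi_cell x w i" by blast
    from eventually_not_mem_voronoi_cell[OF Y W this] show ?thesis by eventually_elim simp
  next
    case False
    from eventually_not_mem_of_hausdorff_tendsto[OF convex_body_closed[OF K]
        convex_body_nonempty[OF K] False convex_body_bounded[OF L] hd]
    show ?thesis by eventually_elim simp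
  qed
  then show ?thesis by eventually_elim (use False in blast)
qed

lemma tendsto_measure_Int_voronoi_cell:
  fixes \<mu> :: "'a::euclidean_space measure" and x :: "'a ^ 'n::finite"
  assumes \<mu>: "finite_measure \<mu>" "sets \<mu> = sets borel" "absolutely_continuous lborel \<mu>"
    and x: "x \<in> conf_space" and K: "convex_body K" and L: "\<And>k. convex_body (L k)"
    and Y: "Y \<longlonglongrightarrow> x" and W: "W \<longlonglongrightarrow> w" and hd: "(\<lambda>k. hausdorff_dist (L k) K) \<longlonglongrightarrow> 0"
  shows "(\<lambda>k. measure \<mu> (L k \<inter> voronoi_cell (Y k) (W k) i)) \<longlonglongrightarrow> measure \<mu> (K \<inter> voronoi_cell x w i)"
proof -
  let ?N = "frontier K \<union> (\<Union>j\<in>-{i}. voronoi_bisector x w i j)"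
  have N: "?N \<in> null_sets \<mu>"
    using K x by (intro null_sets_if_negligible \<mu>(3) borel_closed closed_Un frontier_closed
        closed_voronoi_bisectors negligible_Un negligible_convex_frontier convex_body_convex
        negligible_voronoi_bisectors)
  have conv: "(\<lambda>k. indicator (L k \<inter> voronoi_cell (Y k) (W k) i) p :: real)
      \<longlonglongrightarrow> indicator (K \<inter> voronoi_cell x w i) p" if "p \<notin> ?N" for p
    by (rule tendsto_eventually)
      (use eventually_mem_Int_voronoi_cell_iff[OF K L Y W hd that] in \<open>eventually_elim, simp add: indicator_def\<close>)
  have "AE p in \<mu>. (\<lambda>k. indicator (L k \<inter> voronoi_cell (Y k) (W k) i) p :: real)
      \<longlonglongrightarrow> indicator (K \<inter> voronoi_cell x w i) p"
    by (intro AE_I'[OF N]) (use conv in blast)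
  moreover have "A \<in> sets \<mu>" if "closed A" for A using that \<mu>(2) by simp
  ultimately show ?thesis
    using K L by (intro finite_measure.tendsto_measure_if_AE_tendsto_indicator[OF \<mu>(1)])
      (auto intro: closed_Int closed_voronoi_cell convex_body_closed)
qed

section \<open>Equipartition weights\<close>

lemma norm_le_if_voronoi_cells_meet:
  fixes w :: "real ^ 'n::finite" and y :: "'a::euclidean_space ^ 'n" and R :: real
  assumes "w \<in> W_space" and meet: "\<And>i. \<exists>p\<in>L. p \<in> voronoi_cell y w i"
    and R: "\<And>p. p \<in> L \<Longrightarrow> norm p \<le> R" "\<And>i. norm (y $ i) \<le> R"
  shows "norm w \<le> CARD('n) * (2 * R)\<^sup>2"
proof -
  define M where "M = (2 * R)\<^sup>2"
  have diff: "w $ j - w $ i \<le> M" for i j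
  proof -
    obtain p where p: "p \<in> L" "p \<in> voronoi_cell y w i" using meet by blast
    then have "(norm (p - y $ i))\<^sup>2 - w $ i \<le> (norm (p - y $ j))\<^sup>2 - w $ j"
      by (simp add: voronoi_cell_def)
    then have "w $ j - w $ i \<le> (norm (p - y $ j))\<^sup>2"
      using zero_le_power2[of "norm (p - y $ i)"] by linarith
    also have "\<dots> \<le> M"
      unfolding M_def using R(1)[OF p(1)] R(2)[of j] norm_triangle_ineq4[of p "y $ j"]
      by (intro power_mono) auto
    finally show ?thesis .
  qed
  have coord: "\<bar>w $ j\<bar> \<le> M" for j
  proof -
    have "(\<Sum>i\<in>UNIV. w $ i) = 0" using assms(1) by (simp add: W_space_def)
    then have "CARD('n) * \<bar>w $ j\<bar> = \<bar>\<Sum>i\<in>UNIV. w $ j - w $ i\<bar>"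
      by (simp add: sum_subtractf abs_mult)
    also have "\<dots> \<le> (\<Sum>i\<in>UNIV. \<bar>w $ j - w $ i\<bar>)" by (rule sum_abs)
    also have "\<dots> \<le> CARD('n) * M"
    proof (rule sum_bounded_above[of UNIV _ M, simplified])
      show "\<bar>w $ j - w $ i\<bar> \<le> M" for i
        unfolding abs_le_iff using diff[of i j] diff[of j i] by linarith
    qed
    finally show ?thesis by simp
  qed
  have "norm w \<le> (\<Sum>i\<in>UNIV. \<bar>w $ i\<bar>)" by (rule norm_le_l1_cart)
  also have "\<dots> \<le> CARD('n) * M" using sum_bounded_above[of UNIV "\<lambda>i. \<bar>w $ i\<bar>" M] coord by simp
  finally show ?thesis by (simp add: M_def)
qed

lemma bounded_equipartition_weights:
  fixes Y :: "nat \<Rightarrow> 'a::euclidean_space ^ 'n::finite"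
  assumes "bounded (\<Union>k. L k)" "bounded (range Y)"
    and eq: "\<And>k. equipartition_weight \<mu> (L k) (Y k) (W k)"
  shows "bounded (range W)"
proof -
  obtain B1 B2 where B: "\<And>p. p \<in> (\<Union>k. L k) \<Longrightarrow> norm p \<le> B1" "\<And>k. norm (Y k) \<le> B2"
    using assms(1,2) unfolding bounded_iff by blast
  have "norm (W k) \<le> CARD('n) * (2 * max B1 B2)\<^sup>2" for k
  proof (rule norm_le_if_voronoi_cells_meet)
    show "W k \<in> W_space" using eq[of k] by (simp add: equipartition_weight_def)
    show "\<exists>p\<in>L k. p \<in> voronoi_cell (Y k) (W k) i" for i
      using eq[of k] convex_body_nonempty unfolding equipartition_weight_def by blast
    show "norm p \<le> max B1 B2" if "p \<in> L k" for p using B(1) that by fastforce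
    show "norm (Y k $ i) \<le> max B1 B2" for i
      by (rule order_trans[OF Finite_Cartesian_Product.norm_nth_le]) (use B(2)[of k] in linarith)
  qed
  then show ?thesis unfolding bounded_iff by blast
qed

lemma W_space_eq_0_if_subsingleton:
  fixes w :: "real ^ 'n::finite"
  assumes "\<And>a b :: 'n. a = b" "w \<in> W_space"
  shows "w = 0"
proof -
  have "w $ i = 0" for i
  proof -
    have "(\<Sum>j\<in>UNIV. w $ j) = w $ i + (\<Sum>j\<in>UNIV - {i}. w $ j)" by (rule sum.remove) simp_all
    moreover have "UNIV - {i} = {}" using assms(1) by blast
    ultimately show ?thesis using assms(2) by (simp add: W_space_def)
  qed
  then show ?thesis by (simp add: vec_eq_iff)
qed

lemma perm_act_nth: "perm_act \<sigma> x $ i = x $ inv \<sigma> i"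
  by (simp add: perm_act_def)

lemma voronoi_cell_perm_act:
  assumes "\<sigma> permutes UNIV"
  shows "voronoi_cell (perm_act \<sigma> x) (perm_act \<sigma> w) i = voronoi_cell x w (inv \<sigma> i)"
  unfolding voronoi_cell_def perm_act_nth
  by (metis (no_types, opaque_lifting) assms permutes_inverses(2))

lemma perm_act_conf_space:
  assumes "\<sigma> permutes UNIV" "x \<in> conf_space"
  shows "perm_act \<sigma> x \<in> conf_space"
proof -
  have "inj (inv \<sigma>)" using assms(1) permutes_inj permutes_inv by blast
  with assms(2) show ?thesis unfolding conf_space_def by (auto simp: perm_act_nth dest: injD)
qed

lemma perm_act_W_space:
  assumes "\<sigma> permutes UNIV" "w \<in> W_space"
  shows "perm_act \<sigma> w \<in> W_space"
  using assms sum.permute[OF permutes_inv[OF assms(1)], of "\<lambda>i. w $ i"]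
  by (simp add: W_space_def perm_act_nth comp_def)

lemma equipartition_weight_perm_act:
  assumes "\<sigma> permutes UNIV" "equipartition_weight \<mu> K x w"
  shows "equipartition_weight \<mu> K (perm_act \<sigma> x) (perm_act \<sigma> w)"
  using assms perm_act_W_space unfolding equipartition_weight_def voronoi_cell_perm_act[OF assms(1)]
  by blast

lemma equipartition_weight_wK:
  "\<exists>!w. equipartition_weight \<mu> K x w \<Longrightarrow> equipartition_weight \<mu> K x (wK \<mu> K x)"
  unfolding wK_def by (rule theI')

lemma wK_eqI:
  "\<exists>!w. equipartition_weight \<mu> K x w \<Longrightarrow> equipartition_weight \<mu> K x w \<Longrightarrow> wK \<mu> K x = w"
  unfolding wK_def by (rule the1_equality)

lemma wK_perm_act:
  assumes "\<sigma> permutes UNIV" "\<exists>!w. equipartition_weight \<mu> K x w"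
    and "\<exists>!w. equipartition_weight \<mu> K (perm_act \<sigma> x) w"
  shows "wK \<mu> K (perm_act \<sigma> x) = perm_act \<sigma> (wK \<mu> K x)"
  using assms by (intro wK_eqI equipartition_weight_perm_act equipartition_weight_wK)

lemma W_space_perturbation:
  fixes w :: "real ^ 'n::finite" and a b :: 'n
  assumes "open V" "w \<in> V" "w \<in> W_space" "a \<noteq> b"
  obtains v where "v \<in> V" "v \<in> W_space" "v \<noteq> w"
proof -
  obtain e where e: "e > 0" "ball w e \<subseteq> V" using assms(1,2) open_contains_ball by blast
  define d :: "real ^ 'n" where "d = axis a 1 - axis b 1"
  define v where "v = w + (e / 4) *\<^sub>R d"
  have "norm d \<le> 2" using norm_triangle_ineq4[of "axis a 1 :: real ^ 'n" "axis b 1"] by (simp add: d_def)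
  then have "dist v w < e"
    using mult_left_mono[of "norm d" 2 "e / 4"] e(1) by (simp add: v_def dist_norm)
  then have "v \<in> ball w e" by (simp add: dist_commute)
  with e(2) have "v \<in> V" by (rule subsetD)
  moreover have "v \<in> W_space"
  proof -
    have "(\<Sum>i\<in>UNIV. d $ i) = 0" by (simp add: d_def axis_def sum_subtractf)
    with assms(3) show ?thesis
      by (simp add: W_space_def v_def sum.distrib sum_divide_distrib[symmetric] sum_distrib_left[symmetric])
  qed
  moreover have "v \<noteq> w" using e(1) assms(4) by (auto simp: v_def d_def vec_eq_iff axis_def)
  ultimately show ?thesis by (rule that)
qed

text \<open>If \<open>\<mu> K = 0\<close>, every weight whose cells in \<open>K\<close> have interior is an equipartition weight. Those
  weights form an open set, so an equipartition weight could be moved along \<open>e\<^sub>a - e\<^sub>b\<close>, contradicting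
  uniqueness.\<close>

lemma measure_pos_if_unique_equipartition:
  fixes \<mu> :: "'a::euclidean_space measure" and x :: "'a ^ 'n::finite" and a b :: 'n
  assumes \<mu>: "finite_measure \<mu>" "sets \<mu> = sets borel"
    and unique: "\<exists>!w. equipartition_weight \<mu> K x w"
    and x: "x \<in> conf_space" and K: "convex_body K" and "a \<noteq> b"
  shows "measure \<mu> K > 0"
proof (rule ccontr)
  assume "\<not> measure \<mu> K > 0"
  then have null: "measure \<mu> (K \<inter> voronoi_cell x v i) = 0" for v i
    using finite_measure.finite_measure_mono[OF \<mu>(1), of "K \<inter> voronoi_cell x v i" K]
      convex_body_closed[OF K] \<mu>(2) measure_nonneg[of \<mu>] by (simp add: order_antisym)
  obtain w where w: "equipartition_weight \<mu> K x w" using unique by blast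
  have "\<forall>i. \<exists>p. p \<in> interior K \<inter> strict_voronoi_cell x w i"
    using w interior_Int_strict_voronoi_cell_nonempty[OF x]
    unfolding equipartition_weight_def convex_body_Int_voronoi_cell_iff[OF K] by blast
  then obtain p where p: "\<And>i. p i \<in> interior K \<inter> strict_voronoi_cell x w i" by metis
  let ?V = "\<Inter>i. {v. p i \<in> strict_voronoi_cell x v i}"
  have "open ?V" by (intro open_INT ballI open_weights_strict_voronoi_cell) simp
  moreover have "w \<in> ?V" using p by blast
  moreover have "w \<in> W_space" using w by (simp add: equipartition_weight_def)
  ultimately obtain v where v: "v \<in> ?V" "v \<in> W_space" "v \<noteq> w"
    using \<open>a \<noteq> b\<close> by (rule W_space_perturbation)
  have "equipartition_weight \<mu> K x v"
    unfolding equipartition_weight_def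
  proof (intro conjI allI)
    show "convex_body (K \<inter> voronoi_cell x v i)" for i
      using v(1) p[of i] interior_Int_strict_voronoi_cell_subset[of K x v i]
      by (auto simp: convex_body_Int_voronoi_cell_iff[OF K])
  qed (simp_all add: v(2) null)
  with w v(3) unique show False by blast
qed

lemma equipartition_weight_tendsto:
  fixes \<mu> :: "'a::euclidean_space measure" and x :: "'a ^ 'n::finite"
  assumes \<mu>: "finite_measure \<mu>" "sets \<mu> = sets borel" "absolutely_continuous lborel \<mu>"
    and x: "x \<in> conf_space" and K: "convex_body K" and pos: "measure \<mu> K > 0"
    and L: "\<And>k. convex_body (L k)" and Y: "Y \<longlonglongrightarrow> x" and hd: "(\<lambda>k. hausdorff_dist (L k) K) \<longlonglongrightarrow> 0"
    and eq: "\<And>k. equipartition_weight \<mu> (L k) (Y k) (W k)" and W: "W \<longlonglongrightarrow> w"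
  shows "equipartition_weight \<mu> K x w"
proof -
  note lim = tendsto_measure_Int_voronoi_cell[OF \<mu> x K L Y W hd]
  have same_measure: "measure \<mu> (K \<inter> voronoi_cell x w i) = measure \<mu> (K \<inter> voronoi_cell x w j)" for i j
  proof -
    have same: "(\<lambda>k. measure \<mu> (L k \<inter> voronoi_cell (Y k) (W k) j)) =
        (\<lambda>k. measure \<mu> (L k \<inter> voronoi_cell (Y k) (W k) i))"
    proof
      fix k
      show "measure \<mu> (L k \<inter> voronoi_cell (Y k) (W k) j) = measure \<mu> (L k \<inter> voronoi_cell (Y k) (W k) i)"
        using eq[of k] unfolding equipartition_weight_def by blast
    qed
    from lim[of j] have "(\<lambda>k. measure \<mu> (L k \<inter> voronoi_cell (Y k) (W k) i))
        \<longlonglongrightarrow> measure \<mu> (K \<inter> voronoi_cell x w j)"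
      unfolding same .
    with lim[of i] show ?thesis by (rule LIMSEQ_unique)
  qed
  have "(\<lambda>k. \<Sum>i\<in>UNIV. W k $ i) \<longlonglongrightarrow> (\<Sum>i\<in>UNIV. w $ i)"
    by (intro tendsto_intros W)
  moreover have "(\<Sum>i\<in>UNIV. W k $ i) = 0" for k
    using eq[of k] by (simp add: equipartition_weight_def W_space_def)
  ultimately have "w \<in> W_space" by (simp add: W_space_def LIMSEQ_const_iff)
  have bound: "measure \<mu> K \<le> CARD('n) * measure \<mu> (K \<inter> voronoi_cell x w i)" for i
  proof -
    have "measure \<mu> K = measure \<mu> (\<Union>j. K \<inter> voronoi_cell x w j)"
      using voronoi_cells_cover[of x w] by (intro arg_cong[where f = "measure \<mu>"]) blast
    also have "\<dots> \<le> (\<Sum>j\<in>UNIV. measure \<mu> (K \<inter> voronoi_cell x w j))"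
    proof (rule measure_UNION_le)
      show "K \<inter> voronoi_cell x w j \<in> sets \<mu>" for j
        unfolding \<mu>(2) by (intro borel_closed closed_Int convex_body_closed[OF K] closed_voronoi_cell)
    qed simp
    also have "\<dots> = (\<Sum>j\<in>(UNIV :: 'n set). measure \<mu> (K \<inter> voronoi_cell x w i))"
      by (rule sum.cong[OF refl], rule same_measure)
    finally show ?thesis by simp
  qed
  have "measure \<mu> (K \<inter> voronoi_cell x w i) > 0" for i
    using less_le_trans[OF pos bound[of i]] by (simp add: zero_less_mult_iff)
  then have "interior (K \<inter> voronoi_cell x w i) \<noteq> {}" for i
    by (intro interior_nonempty_if_measure_pos[OF \<mu>(3)] convex_Int closed_Int convex_voronoi_cell
        closed_voronoi_cell convex_body_convex[OF K] convex_body_closed[OF K])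
  then have "convex_body (K \<inter> voronoi_cell x w i)" for i
    by (rule convex_body_Int_voronoi_cell_iff[OF K, THEN iffD2])
  with \<open>w \<in> W_space\<close> show ?thesis
    unfolding equipartition_weight_def by (intro conjI allI same_measure)
qed

lemma wK_subseq_tendsto:
  fixes \<mu> :: "'a::euclidean_space measure" and x :: "'a ^ 'n::finite" and a b :: 'n
  assumes \<mu>: "finite_measure \<mu>" "sets \<mu> = sets borel" "absolutely_continuous lborel \<mu>"
    and unique: "\<And>K (x :: 'a ^ 'n). convex_body K \<Longrightarrow> x \<in> conf_space \<Longrightarrow>
      \<exists>!w. equipartition_weight \<mu> K x w"
    and x: "x \<in> conf_space" and K: "convex_body K" and "a \<noteq> b"
    and L: "\<And>k. convex_body (L k)" "bounded (\<Union>k. L k)" and hd: "(\<lambda>k. hausdorff_dist (L k) K) \<longlonglongrightarrow> 0"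
    and Y: "\<And>k. Y k \<in> conf_space" "Y \<longlonglongrightarrow> x"
  obtains r where "strict_mono r" "(\<lambda>k. wK \<mu> (L (r k)) (Y (r k))) \<longlonglongrightarrow> wK \<mu> K x"
proof -
  define W where "W k = wK \<mu> (L k) (Y k)" for k
  have eq: "equipartition_weight \<mu> (L k) (Y k) (W k)" for k
    unfolding W_def by (intro equipartition_weight_wK unique L Y)
  have "bounded (range W)"
    by (rule bounded_equipartition_weights[OF L(2) convergent_imp_bounded[OF Y(2)] eq])
  then obtain r l where r: "strict_mono r" "(W \<circ> r) \<longlonglongrightarrow> l"
    using bounded_imp_convergent_subsequence by blast
  have "measure \<mu> K > 0"
    using \<open>a \<noteq> b\<close> by (rule measure_pos_if_unique_equipartition[OF \<mu>(1,2) unique[OF K x] x K])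
  then have "equipartition_weight \<mu> K x l"
    using LIMSEQ_subseq_LIMSEQ[OF Y(2) r(1)] LIMSEQ_subseq_LIMSEQ[OF hd r(1)] r(2)
    by (intro equipartition_weight_tendsto[OF \<mu> x K, of "L \<circ> r" "Y \<circ> r" "W \<circ> r"])
      (simp_all add: L(1) eq comp_def)
  then have "l = wK \<mu> K x" by (rule wK_eqI[OF unique[OF K x], symmetric])
  with r show ?thesis using that by (simp add: W_def comp_def)
qed

lemma wK_continuous:
  fixes \<mu> :: "'a::euclidean_space measure" and x :: "'a ^ 'n::finite"
  assumes \<mu>: "finite_measure \<mu>" "sets \<mu> = sets borel" "absolutely_continuous lborel \<mu>"
    and unique: "\<And>K (x :: 'a ^ 'n). convex_body K \<Longrightarrow> x \<in> conf_space \<Longrightarrow>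
      \<exists>!w. equipartition_weight \<mu> K x w"
    and x: "x \<in> conf_space" and K: "convex_body K" and "\<epsilon> > 0"
  shows "\<exists>\<delta>>0. \<forall>y \<in> conf_space. \<forall>L. convex_body L \<longrightarrow> dist y x < \<delta> \<longrightarrow>
           hausdorff_dist L K < \<delta> \<longrightarrow> dist (wK \<mu> L y) (wK \<mu> K x) < \<epsilon>"
proof (cases "\<exists>a b :: 'n. a \<noteq> b")
  case False
  then have "wK \<mu> L y = 0" if "convex_body L" "y \<in> conf_space" for L and y :: "'a ^ 'n"
    using equipartition_weight_wK[OF unique[OF that]]
    by (intro W_space_eq_0_if_subsingleton) (auto simp: equipartition_weight_def)
  then show ?thesis using x K \<open>\<epsilon> > 0\<close> by (intro exI[of _ 1]) simp
next
  case True
  then obtain a b :: 'n where "a \<noteq> b" by blast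
  show ?thesis
  proof (rule ccontr)
    assume "\<not> ?thesis"
    then have far: "\<forall>\<delta>>0. \<exists>y\<in>conf_space. \<exists>L. convex_body L \<and> dist y x < \<delta> \<and>
        hausdorff_dist L K < \<delta> \<and> \<not> dist (wK \<mu> L y) (wK \<mu> K x) < \<epsilon>"
      by blast
    have "\<exists>y L. y \<in> conf_space \<and> convex_body L \<and> dist y x < 1 / Suc k \<and>
        hausdorff_dist L K < 1 / Suc k \<and> \<not> dist (wK \<mu> L y) (wK \<mu> K x) < \<epsilon>" for k :: nat
      using far[rule_format, of "1 / Suc k"] by auto
    then obtain Y L where YL: "\<And>k. Y k \<in> conf_space" "\<And>k. convex_body (L k)"
      "\<And>k. dist (Y k) x < 1 / Suc k" "\<And>k. hausdorff_dist (L k) K < 1 / Suc k"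
      "\<And>k. \<not> dist (wK \<mu> (L k) (Y k)) (wK \<mu> K x) < \<epsilon>"
      by metis
    have "(\<lambda>k. dist (Y k) x) \<longlonglongrightarrow> 0"
      by (rule LIMSEQ_norm_0) (use YL(3) in simp)
    then have Y: "Y \<longlonglongrightarrow> x" by (rule tendsto_dist_iff[THEN iffD2])
    have "0 \<le> hausdorff_dist (L k) K" for k
      using YL(2)[of k] K
      by (intro hausdorff_dist_nonneg convex_body_bounded convex_body_nonempty) assumption+
    then have hd: "(\<lambda>k. hausdorff_dist (L k) K) \<longlonglongrightarrow> 0"
      using YL(4) by (intro LIMSEQ_norm_0) simp
    have "hausdorff_dist (L k) K < 1" for k
      using YL(4)[of k] by (rule less_le_trans) simp
    then have "bounded (\<Union>k. L k)"
      using convex_body_bounded[OF K] convex_body_nonempty[OF K] convex_body_bounded[OF YL(2)]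
      by (intro bounded_Union_if_hausdorff_dist_lt) auto
    obtain r where "(\<lambda>k. wK \<mu> (L (r k)) (Y (r k))) \<longlonglongrightarrow> wK \<mu> K x"
      by (rule wK_subseq_tendsto[OF \<mu> unique x K \<open>a \<noteq> b\<close> YL(2) \<open>bounded (\<Union>k. L k)\<close> hd
            YL(1) Y])
    from tendstoD[OF this \<open>\<epsilon> > 0\<close>]
    obtain N where "\<forall>k\<ge>N. dist (wK \<mu> (L (r k)) (Y (r k))) (wK \<mu> K x) < \<epsilon>"
      by (auto simp: eventually_sequentially)
    with YL(5)[of "r N"] show False by simp
  qed
qed

theorem lemma6p5:
  fixes \<mu> :: "'a::euclidean_space measure"
    and dummy :: "'n::finite"
  assumes "prob_space \<mu>"
    and "sets \<mu> = sets borel"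
    and "absolutely_continuous lborel \<mu>"
    and standing_fact: "\<And>K (x :: 'a ^ 'n). convex_body K \<Longrightarrow> x \<in> conf_space \<Longrightarrow>
           \<exists>!w. equipartition_weight \<mu> K x w"
  shows "(\<forall>(x :: 'a ^ 'n) \<in> conf_space. \<forall>K. convex_body K \<longrightarrow>
            (\<forall>\<epsilon>>0. \<exists>\<delta>>0. \<forall>y \<in> conf_space. \<forall>L. convex_body L \<longrightarrow>
               dist y x < \<delta> \<longrightarrow> hausdorff_dist L K < \<delta> \<longrightarrow>
               dist (wK \<mu> L y) (wK \<mu> K x) < \<epsilon>))
       \<and> (\<forall>(x :: 'a ^ 'n) \<in> conf_space. \<forall>K. convex_body K \<longrightarrow> wK \<mu> K x \<in> W_space)
       \<and> (\<forall>\<sigma> (x :: 'a ^ 'n) K. \<sigma> permutes UNIV \<longrightarrow> x \<in> conf_space \<longrightarrow> convex_body K \<longrightarrow>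
            wK \<mu> K (perm_act \<sigma> x) = perm_act \<sigma> (wK \<mu> K x))"
proof (intro conjI ballI allI impI)
  fix x :: "'a ^ 'n" and K :: "'a set" assume "x \<in> conf_space" "convex_body K"
  then show "wK \<mu> K x \<in> W_space"
    using equipartition_weight_wK[OF standing_fact] by (simp add: equipartition_weight_def)
  fix \<epsilon> :: real assume "\<epsilon> > 0"
  with \<open>x \<in> conf_space\<close> \<open>convex_body K\<close> show "\<exists>\<delta>>0. \<forall>y \<in> conf_space. \<forall>L. convex_body L \<longrightarrow>
      dist y x < \<delta> \<longrightarrow> hausdorff_dist L K < \<delta> \<longrightarrow> dist (wK \<mu> L y) (wK \<mu> K x) < \<epsilon>"
    by (intro wK_continuous[OF prob_space.finite_measure[OF assms(1)] assms(2,3) standing_fact])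
next
  fix \<sigma> :: "'n \<Rightarrow> 'n" and x :: "'a ^ 'n" and K :: "'a set"
  assume "\<sigma> permutes UNIV" "x \<in> conf_space" "convex_body K"
  then show "wK \<mu> K (perm_act \<sigma> x) = perm_act \<sigma> (wK \<mu> K x)"
    by (intro wK_perm_act standing_fact perm_act_conf_space)
qed

end
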